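(* Let $A$ be an additive poset and $a,b\in A$. Then $a$ covers $b$ if and only if $a+b$ is an atom of $A$ and $a+b\le a$.
   Context: An additive poset is a pair $(A,\le)$ where $A$ is an abelian group and $\le$ is a partial order on $A$ such that for all $a,b,c\in A$: $(\ast)$ if $b\le a$ and $c\le a$ then $b+c\le a$; $(\ast\ast)$ if $a\le b$ and $a\le c$ then $a\le a+b+c$. (Then $0$ is the least element.) An element $a$ covers $b$ if $b<a$ (i.e. $b\le a$, $b\ne a$) and there is no $c$ with $b<c<a$. An atom of $A$ is an element covering $0$, i.e. a nonzero $a$ whose tail $A_a=\{x\in A:x\le a\}$ equals $\{0,a\}$. *)

theory Defs
  imports Main
begin

definition additive_poset :: "('a::ab_group_add \<Rightarrow> 'a \<Rightarrow> bool) \<Rightarrow> bool" where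
  "additive_poset le \<longleftrightarrow>
     (\<forall>a. le a a) \<and>
     (\<forall>a b. le a b \<and> le b a \<longrightarrow> a = b) \<and>
     (\<forall>a b c. le a b \<and> le b c \<longrightarrow> le a c) \<and>
     (\<forall>a b c. le b a \<and> le c a \<longrightarrow> le (b + c) a) \<and>
     (\<forall>a b c. le a b \<and> le a c \<longrightarrow> le a (a + b + c))"

definition strict :: "('a \<Rightarrow> 'a \<Rightarrow> bool) \<Rightarrow> 'a \<Rightarrow> 'a \<Rightarrow> bool" where
  "strict le b a \<longleftrightarrow> le b a \<and> b \<noteq> a"

definition covers :: "('a \<Rightarrow> 'a \<Rightarrow> bool) \<Rightarrow> 'a \<Rightarrow> 'a \<Rightarrow> bool" where
  "covers le a b \<longleftrightarrow> strict le b a \<and> \<not> (\<exists>c. strict le b c \<and> strict le c a)"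

definition tail :: "('a \<Rightarrow> 'a \<Rightarrow> bool) \<Rightarrow> 'a \<Rightarrow> 'a set" where
  "tail le a = {x. le x a}"

definition atom :: "('a::zero \<Rightarrow> 'a \<Rightarrow> bool) \<Rightarrow> 'a \<Rightarrow> bool" where
  "atom le a \<longleftrightarrow> a \<noteq> 0 \<and> tail le a = {0, a}"

end

theory Submission
  imports Defs
begin

text \<open>Axiom (\<ast>) with a = b = c gives a + a \<le> a, and then (\<ast>\<ast>) and (\<ast>) force a + a + a = a,
  so every element has order two and 0 is the least element. Hence if b \<le> a, translation by b
  is an order isomorphism from the tail of a + b onto the interval [b, a] (it maps 0 to b and
  a + b to a), so a covers b exactly when the tail of a + b is {0, a + b}. Finally a + b \<le> a
  is equivalent to b \<le> a, since a + (a + b) = b.\<close>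

locale additive_poset_rel =
  fixes le :: "'a::ab_group_add \<Rightarrow> 'a \<Rightarrow> bool"
  assumes additive_poset: "additive_poset le"
begin

lemma refl: "le x x"
  and antisym: "le x y \<Longrightarrow> le y x \<Longrightarrow> x = y"
  and trans: "le x y \<Longrightarrow> le y z \<Longrightarrow> le x z"
  and add_le: "le y x \<Longrightarrow> le z x \<Longrightarrow> le (y + z) x"
  and le_add_add: "le x y \<Longrightarrow> le x z \<Longrightarrow> le x (x + y + z)"
  using additive_poset unfolding additive_poset_def by blast+

lemma add_self_eq_zero [simp]: "(x::'a) + x = 0"
proof -
  have "le (x + x) x" by (rule add_le[OF refl refl])
  then have "le (x + x + x) x" by (rule add_le[OF _ refl])
  moreover have "le x (x + x + x)" by (rule le_add_add[OF refl refl])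
  ultimately have "x + (x + x) = x + 0"
    by (metis antisym add.assoc add_0_right)
  then show ?thesis
    by (simp only: add_left_cancel)
qed

lemma add_add_cancel [simp]: "(x::'a) + (x + y) = y"
  by (simp flip: add.assoc)

lemma add_eq_zero_iff: "(x::'a) + y = 0 \<longleftrightarrow> x = y"
  by (metis add_add_cancel add_self_eq_zero add_0_right)

lemma zero_le: "le 0 x"
  using add_le[OF refl refl, of x] by simp

lemma add_le_iff: "le (a + b) a \<longleftrightarrow> le b a"
proof
  assume "le (a + b) a"
  from add_le[OF this refl] show "le b a"
    by (simp add: add.commute add.left_commute)
qed (rule add_le[OF refl])

lemma interval_iff_tail:
  assumes "le b a"
  shows "le b c \<and> le c a \<longleftrightarrow> le (b + c) (a + b)"
proof
  assume "le b c \<and> le c a"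
  then have "le (b + c) c" and "le (b + c) a"
    using add_le[OF _ refl] add_le[OF assms] by blast+
  from le_add_add[OF this] show "le (b + c) (a + b)"
    by (simp add: ac_simps)
next
  assume le_tail: "le (b + c) (a + b)"
  have "le (a + b) a"
    using assms by (simp add: add_le_iff)
  with le_tail have le_a: "le (b + c) a"
    by (rule trans)
  from le_add_add[OF le_tail this] have "le (b + c) c"
    by (simp add: ac_simps)
  from add_le[OF this refl] have "le b c"
    by (simp add: ac_simps)
  moreover from add_le[OF le_a assms] have "le c a"
    by (simp add: ac_simps)
  ultimately show "le b c \<and> le c a" ..
qed

lemma covers_iff_atom:
  assumes "le b a"
  shows "covers le a b \<longleftrightarrow> atom le (a + b)"
proof -
  have translate: "(\<forall>c. Q (b + c)) \<longleftrightarrow> (\<forall>x. Q x)" for Q :: "'a \<Rightarrow> bool"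
    by (metis add_add_cancel)
  have "covers le a b \<longleftrightarrow> b \<noteq> a \<and> (\<forall>c. le b c \<and> le c a \<longrightarrow> c = b \<or> c = a)"
    using assms unfolding covers_def strict_def by blast
  also have "\<dots> \<longleftrightarrow> a + b \<noteq> 0 \<and> (\<forall>c. le (b + c) (a + b) \<longrightarrow> b + c = 0 \<or> b + c = a + b)"
    using interval_iff_tail[OF assms] by (auto simp: add_eq_zero_iff add.commute[of a b])
  also have "\<dots> \<longleftrightarrow> a + b \<noteq> 0 \<and> (\<forall>x. le x (a + b) \<longrightarrow> x = 0 \<or> x = a + b)"
    by (rule arg_cong[where f = "\<lambda>P. a + b \<noteq> 0 \<and> P"], rule translate)
  also have "\<dots> \<longleftrightarrow> atom le (a + b)"
    unfolding atom_def tail_def using zero_le refl by auto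
  finally show ?thesis .
qed

end

theorem lemma5p1:
  fixes le :: "'a::ab_group_add \<Rightarrow> 'a \<Rightarrow> bool" and a b :: 'a
  assumes "additive_poset le"
  shows "covers le a b \<longleftrightarrow> atom le (a + b) \<and> le (a + b) a"
proof -
  interpret additive_poset_rel le
    using assms by unfold_locales
  have "covers le a b \<Longrightarrow> le b a"
    unfolding covers_def strict_def by blast
  then show ?thesis
    using covers_iff_atom add_le_iff by blast
qed

end
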